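(* Let $\mathcal C$ be an uncountable algebraically closed field of characteristic zero and $p\ge2$ an integer. Let $X\subset GL_n(\mathcal C)$ be the Zariski closed set of all $v$ satisfying: (1) $(v^m)^{(p)}=(v^{(p)})^m$ for all $m\ge0$, and (2) $(v^m)^{(p)}(v^{-m})^{(p)}=1$ for all $m\ge0$ (equalities in $\mathfrak{gl}_n(\mathcal C)$). Then $X$ has exactly one irreducible component passing through $1$, and that component is the group $T$ of diagonal matrices in $GL_n(\mathcal C)$.
   Context: For a matrix $v=(v_{ij})$, $v^{(p)}=(v_{ij}^p)$ denotes the entrywise $p$-th power. *)

theory Defs
  imports "HOL-Analysis.Analysis" "HOL-Computational_Algebra.Polynomial"
begin

text \<open>Matrices in gl_n(C) are 'a^'n^'n with a finite index type 'n (n = CARD('n)).\<close>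

type_synonym ('a, 'n) sqmat = "'a ^ 'n ^ 'n"

primrec mpow :: "('a::semiring_1) ^'n^'n \<Rightarrow> nat \<Rightarrow> 'a^'n^'n" where
  "mpow v 0 = mat 1"
| "mpow v (Suc m) = v ** mpow v m"

definition epow :: "('a::semiring_1) ^'n^'n \<Rightarrow> nat \<Rightarrow> 'a^'n^'n" where
  "epow v p = (\<chi> i j. (v $ i $ j) ^ p)"

definition GL :: "('a::field ^'n^'n) set" where
  "GL = {v. invertible v}"

inductive_set poly_fun :: "(('a::field) ^'n^'n \<Rightarrow> 'a) set" where
  const: "(\<lambda>v. c) \<in> poly_fun"
| entry: "(\<lambda>v. v $ i $ j) \<in> poly_fun"
| add: "f \<in> poly_fun \<Longrightarrow> g \<in> poly_fun \<Longrightarrow> (\<lambda>v. f v + g v) \<in> poly_fun"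
| mult: "f \<in> poly_fun \<Longrightarrow> g \<in> poly_fun \<Longrightarrow> (\<lambda>v. f v * g v) \<in> poly_fun"

text \<open>Zariski closed subsets of GL_n: common zero loci in GL_n of families of polynomial
  functions in the entries (regular functions on GL_n are such polynomials divided by
  powers of det, which does not change zero loci on GL_n).\<close>
definition zariski_closed_GL :: "('a::field ^'n^'n) set \<Rightarrow> bool" where
  "zariski_closed_GL Z \<longleftrightarrow> (\<exists>S \<subseteq> poly_fun. Z = {v \<in> GL. \<forall>f\<in>S. f v = 0})"

definition zariski_irreducible :: "('a::field ^'n^'n) set \<Rightarrow> bool" where
  "zariski_irreducible Y \<longleftrightarrow> Y \<subseteq> GL \<and> Y \<noteq> {} \<and>
     (\<forall>A B. zariski_closed_GL A \<longrightarrow> zariski_closed_GL B \<longrightarrow> Y \<subseteq> A \<union> B \<longrightarrow> Y \<subseteq> A \<or> Y \<subseteq> B)"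

definition irreducible_component :: "('a::field ^'n^'n) set \<Rightarrow> ('a ^'n^'n) set \<Rightarrow> bool" where
  "irreducible_component X Z \<longleftrightarrow> Z \<subseteq> X \<and> zariski_irreducible Z \<and>
     (\<forall>Y. Y \<subseteq> X \<longrightarrow> zariski_irreducible Y \<longrightarrow> Z \<subseteq> Y \<longrightarrow> Y = Z)"

definition alg_closed :: "'a::field itself \<Rightarrow> bool" where
  "alg_closed _ \<longleftrightarrow> (\<forall>q :: 'a poly. degree q \<ge> 1 \<longrightarrow> (\<exists>x. poly q x = 0))"

definition Xset :: "nat \<Rightarrow> ('a::field ^'n^'n) set" where
  "Xset p = {v \<in> GL.
     (\<forall>m. epow (mpow v m) p = mpow (epow v p) m) \<and>
     (\<forall>m. epow (mpow v m) p ** epow (mpow (matrix_inv v) m) p = mat 1)}"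

definition diag_torus :: "('a::field ^'n^'n) set" where
  "diag_torus = {v \<in> GL. \<forall>i j. i \<noteq> j \<longrightarrow> v $ i $ j = 0}"

end

theory Submission
  imports Defs
begin

text \<open>Let J be the ideal generated by the off-diagonal entries v_ij. For i \<noteq> j, entry (i, j)
  of (v^2)^(p) = (v^(p))^2 shows that on X the element ((v_ii + v_jj)^p - v_ii^p - v_jj^p) v_ij^p
  lies in J^(p+1), and its coefficient equals 2^p - 2 \<noteq> 0 at the identity. By pigeonhole the
  product c of these coefficients maps J^K into J^(K+1) on X for large K, so the determinant trick
  yields a polynomial h with h(1) \<noteq> 0 annihilating J^K on X. Hence all off-diagonal entries
  vanish on X \<inter> {h \<noteq> 0}, and an irreducible Y \<subseteq> X through 1 lies in T \<union> {h = 0} but not in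
  {h = 0}, whence Y \<subseteq> T. Conversely T \<subseteq> X, and T is irreducible: two polynomials not vanishing
  identically on T have a common nonzero on the line through two witnesses, the field being
  infinite.\<close>

section \<open>Off-diagonal monomials and the ideal they generate\<close>

lemma poly_fun_uminus: "f \<in> poly_fun \<Longrightarrow> (\<lambda>v. - f v) \<in> poly_fun"
  using poly_fun.mult[OF poly_fun.const[of "-1"]] by simp

lemma poly_fun_diff: "f \<in> poly_fun \<Longrightarrow> g \<in> poly_fun \<Longrightarrow> (\<lambda>v. f v - g v) \<in> poly_fun"
  using poly_fun.add[OF _ poly_fun_uminus] by simp

lemma poly_fun_power: "f \<in> poly_fun \<Longrightarrow> (\<lambda>v. f v ^ m) \<in> poly_fun"
  by (induction m) (auto intro: poly_fun.intros)

lemma poly_fun_prod: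
  "finite A \<Longrightarrow> (\<And>x. x \<in> A \<Longrightarrow> f x \<in> poly_fun) \<Longrightarrow> (\<lambda>v. \<Prod>x\<in>A. f x v) \<in> poly_fun"
  by (induction A rule: finite_induct) (auto intro: poly_fun.intros)

definition entry :: "'n \<times> 'n \<Rightarrow> 'a^'n^'n \<Rightarrow> 'a" where
  "entry x v = v $ fst x $ snd x"

definition entry_prod :: "('n \<times> 'n) list \<Rightarrow> ('a::comm_monoid_mult)^'n^'n \<Rightarrow> 'a" where
  "entry_prod L v = (\<Prod>x\<leftarrow>L. entry x v)"

definition off_diag :: "('n \<times> 'n) set" where
  "off_diag = {x. fst x \<noteq> snd x}"

lemma entry_prod_append: "entry_prod (L @ M) v = entry_prod L v * entry_prod M v"
  by (simp add: entry_prod_def)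

lemma entry_prod_replicate: "entry_prod (replicate k x) v = entry x v ^ k"
  by (simp add: entry_prod_def)

lemma poly_fun_entry_prod:
  fixes L :: "('n::finite \<times> 'n) list"
  shows "(entry_prod L :: 'a::field^'n^'n \<Rightarrow> 'a) \<in> poly_fun"
proof (induction L)
  case Nil
  then show ?case using poly_fun.const[of 1] by (simp add: entry_prod_def)
next
  case (Cons x L)
  have "(\<lambda>v :: 'a^'n^'n. v $ fst x $ snd x * entry_prod L v) \<in> poly_fun"
    by (intro poly_fun.mult poly_fun.entry Cons.IH)
  then show ?case by (simp add: entry_prod_def entry_def)
qed

lemma entry_prod_mat_1:
  assumes "set L \<subseteq> off_diag" "L \<noteq> []"
  shows "entry_prod L (mat 1 :: 'a::comm_semiring_1^'n^'n) = 0"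
proof -
  obtain x L' where "L = x # L'" using assms(2) by (cases L) auto
  with assms(1) show ?thesis by (simp add: entry_prod_def entry_def off_diag_def mat_def)
qed

lemma entry_prod_remove1: "x \<in> set L \<Longrightarrow> entry_prod L v = entry x v * entry_prod (remove1 x L) v"
  by (induction L) (auto simp: entry_prod_def mult.left_commute)

lemma entry_prod_extract_power:
  "k \<le> count_list L x \<Longrightarrow> \<exists>M. length M = length L - k \<and> set M \<subseteq> set L \<and>
     (\<forall>v :: 'a::comm_monoid_mult^'n::finite^'n. entry_prod L v = entry x v ^ k * entry_prod M v)"
proof (induction k arbitrary: L)
  case 0
  then show ?case by auto
next
  case (Suc k)
  then have x: "x \<in> set L"
    by (metis count_list_0_iff not_less_eq_eq zero_le)
  with Suc.prems have "k \<le> count_list (remove1 x L) x"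
    by simp
  with Suc.IH obtain M where M: "length M = length (remove1 x L) - k" "set M \<subseteq> set (remove1 x L)"
    "\<forall>v :: 'a^'n^'n. entry_prod (remove1 x L) v = entry x v ^ k * entry_prod M v"
    by blast
  have "length M = length L - Suc k"
    using M(1) x by (simp add: length_remove1)
  moreover have "set M \<subseteq> set L"
    using M(2) set_remove1_subset by fastforce
  moreover have "entry_prod L v = entry x v ^ Suc k * entry_prod M v" for v :: "'a^'n^'n"
    using entry_prod_remove1[OF x, of v] M(3) by (simp add: mult.assoc)
  ultimately show ?case by blast
qed

lemma count_list_pigeonhole:
  assumes "finite S" "set L \<subseteq> S" "card S * (p - 1) < length L"
  shows "\<exists>x\<in>S. p \<le> count_list L x"
proof (rule ccontr)
  assume "\<not> ?thesis"
  then have "count_list L x \<le> p - 1" if "x \<in> S" for x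
    using that by fastforce
  then have "(\<Sum>x\<in>S. count_list L x) \<le> card S * (p - 1)"
    using sum_mono[of S "count_list L" "\<lambda>_. p - 1"] by simp
  with assms show False by (simp add: sum_count_set)
qed

inductive_set offdiag_ideal_power :: "nat \<Rightarrow> ('a::field^'n^'n \<Rightarrow> 'a) set" for k where
  zero: "(\<lambda>v. 0) \<in> offdiag_ideal_power k"
| monomial: "g \<in> poly_fun \<Longrightarrow> set L \<subseteq> off_diag \<Longrightarrow> k \<le> length L \<Longrightarrow>
    (\<lambda>v. g v * entry_prod L v) \<in> offdiag_ideal_power k"
| add: "f \<in> offdiag_ideal_power k \<Longrightarrow> g \<in> offdiag_ideal_power k \<Longrightarrow>
    (\<lambda>v. f v + g v) \<in> offdiag_ideal_power k"

lemma offdiag_ideal_power_mono: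
  "f \<in> offdiag_ideal_power k' \<Longrightarrow> k \<le> k' \<Longrightarrow> f \<in> offdiag_ideal_power k"
proof (induction rule: offdiag_ideal_power.induct)
  case zero
  show ?case by (rule offdiag_ideal_power.zero)
next
  case (monomial g L)
  then show ?case by (intro offdiag_ideal_power.monomial) auto
next
  case (add f g)
  then show ?case by (intro offdiag_ideal_power.add)
qed

lemma offdiag_ideal_power_poly_mult:
  assumes "h \<in> poly_fun" "f \<in> offdiag_ideal_power k"
  shows "(\<lambda>v. h v * f v) \<in> offdiag_ideal_power k"
  using assms(2)
proof (induction rule: offdiag_ideal_power.induct)
  case zero
  show ?case using offdiag_ideal_power.zero by simp
next
  case (monomial g L)
  then have "(\<lambda>v. (h v * g v) * entry_prod L v) \<in> offdiag_ideal_power k"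
    by (intro offdiag_ideal_power.monomial poly_fun.mult assms(1))
  then show ?case by (simp add: mult.assoc)
next
  case (add f g)
  then show ?case using offdiag_ideal_power.add[OF add.IH] by (simp add: distrib_left)
qed

lemma offdiag_ideal_power_uminus:
  "f \<in> offdiag_ideal_power k \<Longrightarrow> (\<lambda>v. - f v) \<in> offdiag_ideal_power k"
  using offdiag_ideal_power_poly_mult[OF poly_fun.const[of "-1"]] by simp

lemma offdiag_ideal_power_diff:
  "f \<in> offdiag_ideal_power k \<Longrightarrow> g \<in> offdiag_ideal_power k \<Longrightarrow>
    (\<lambda>v. f v - g v) \<in> offdiag_ideal_power k"
  using offdiag_ideal_power.add[OF _ offdiag_ideal_power_uminus] by simp

lemma offdiag_ideal_power_sum:
  "finite A \<Longrightarrow> (\<And>x. x \<in> A \<Longrightarrow> f x \<in> offdiag_ideal_power k) \<Longrightarrow>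
    (\<lambda>v. \<Sum>x\<in>A. f x v) \<in> offdiag_ideal_power k"
  by (induction A rule: finite_induct) (simp_all add: offdiag_ideal_power.zero offdiag_ideal_power.add)

lemma entry_prod_in_offdiag_ideal_power:
  fixes L :: "('n::finite \<times> 'n) list"
  assumes "set L \<subseteq> off_diag"
  shows "(entry_prod L :: 'a::field^'n^'n \<Rightarrow> 'a) \<in> offdiag_ideal_power (length L)"
  using offdiag_ideal_power.monomial[OF poly_fun.const[of 1] assms order_refl] by simp

lemma entry_in_offdiag_ideal_power:
  fixes i j :: "'n::finite"
  assumes "i \<noteq> j"
  shows "(\<lambda>v :: 'a::field^'n^'n. v $ i $ j) \<in> offdiag_ideal_power 1"
proof -
  have "set [(i, j)] \<subseteq> off_diag"
    using assms by (simp add: off_diag_def)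
  moreover have "entry_prod [(i, j)] = (\<lambda>v :: 'a^'n^'n. v $ i $ j)"
    by (simp add: entry_prod_def entry_def fun_eq_iff)
  ultimately show ?thesis
    using entry_prod_in_offdiag_ideal_power[of "[(i, j)]", where 'a='a] by simp
qed

lemma offdiag_ideal_power_mult:
  assumes "f \<in> offdiag_ideal_power a" "g \<in> offdiag_ideal_power b"
  shows "(\<lambda>v. f v * g v) \<in> offdiag_ideal_power (a + b)"
  using assms(1)
proof (induction rule: offdiag_ideal_power.induct)
  case zero
  show ?case using offdiag_ideal_power.zero by simp
next
  case (monomial g1 L1)
  from assms(2) show ?case
  proof (induction rule: offdiag_ideal_power.induct)
    case zero
    show ?case using offdiag_ideal_power.zero by simp
  next
    case (monomial g2 L2)
    have "(\<lambda>v. (g1 v * g2 v) * entry_prod (L1 @ L2) v) \<in> offdiag_ideal_power (a + b)"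
      using monomial.hyps \<open>g1 \<in> poly_fun\<close> \<open>set L1 \<subseteq> off_diag\<close> \<open>a \<le> length L1\<close>
      by (intro offdiag_ideal_power.monomial poly_fun.mult) auto
    then show ?case by (simp add: entry_prod_append mult_ac)
  next
    case (add f g)
    then show ?case using offdiag_ideal_power.add[OF add.IH] by (simp add: distrib_left)
  qed
next
  case (add f g)
  then show ?case using offdiag_ideal_power.add[OF add.IH] by (simp add: distrib_right)
qed

lemma offdiag_ideal_power_power:
  "f \<in> offdiag_ideal_power a \<Longrightarrow> (\<lambda>v. f v ^ m) \<in> offdiag_ideal_power (a * m)"
proof (induction m)
  case 0
  show ?case using offdiag_ideal_power.monomial[OF poly_fun.const[of 1], of "[]"] by (simp add: entry_prod_def)
next
  case (Suc m)
  then show ?case using offdiag_ideal_power_mult[OF Suc.prems Suc.IH] by simp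
qed

lemma power_add_diff_in_offdiag_ideal_power:
  assumes A: "A \<in> offdiag_ideal_power 1" and B: "B \<in> offdiag_ideal_power 2"
  shows "(\<lambda>v. (A v + B v) ^ m - A v ^ m) \<in> offdiag_ideal_power (Suc m)"
proof (induction m)
  case 0
  then show ?case using offdiag_ideal_power.zero by simp
next
  case (Suc m)
  have AB: "(\<lambda>v. A v + B v) \<in> offdiag_ideal_power 1"
    using offdiag_ideal_power.add[OF A offdiag_ideal_power_mono[OF B]] by simp
  have "(\<lambda>v. (A v + B v) * ((A v + B v) ^ m - A v ^ m) + B v * A v ^ m)
      \<in> offdiag_ideal_power (Suc (Suc m))"
    using offdiag_ideal_power_mult[OF AB Suc.IH]
      offdiag_ideal_power_mult[OF B offdiag_ideal_power_power[OF A, of m]]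
    by (intro offdiag_ideal_power.add) simp_all
  moreover have "(A v + B v) ^ Suc m - A v ^ Suc m
      = (A v + B v) * ((A v + B v) ^ m - A v ^ m) + B v * A v ^ m" for v
    by (simp add: algebra_simps)
  ultimately show ?case by simp
qed

definition offdiag_lists :: "nat \<Rightarrow> ('n \<times> 'n) list set" where
  "offdiag_lists k = {L. set L \<subseteq> off_diag \<and> length L = k}"

lemma finite_offdiag_lists: "finite (offdiag_lists k :: ('n::finite \<times> 'n) list set)"
  unfolding offdiag_lists_def
  by (rule rev_finite_subset[OF finite_lists_length_eq[of "UNIV :: ('n \<times> 'n) set" k]]) auto

text \<open>A monomial of degree > k is split after its first k factors; the remaining factor
  vanishes at 1.\<close>

lemma offdiag_ideal_power_Suc_normal_form:
  fixes f :: "'a::field^'n::finite^'n \<Rightarrow> 'a"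
  assumes "f \<in> offdiag_ideal_power (Suc k)"
  shows "\<exists>c. (\<forall>L\<in>offdiag_lists k. c L \<in> poly_fun \<and> c L (mat 1) = 0) \<and>
      (\<forall>v. f v = (\<Sum>L\<in>offdiag_lists k. c L v * entry_prod L v))"
  using assms
proof (induction rule: offdiag_ideal_power.induct)
  case zero
  show ?case by (intro exI[of _ "\<lambda>L v. 0"]) (simp add: poly_fun.const)
next
  case (monomial g L)
  define L1 L2 where "L1 = take k L" and "L2 = drop k L"
  have L1: "L1 \<in> offdiag_lists k" and L2: "set L2 \<subseteq> off_diag" "L2 \<noteq> []"
    using monomial unfolding L1_def L2_def offdiag_lists_def
    by (auto dest: in_set_takeD in_set_dropD)
  have split: "entry_prod L v = entry_prod L1 v * entry_prod L2 v" for v :: "'a^'n^'n"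
    unfolding L1_def L2_def by (metis append_take_drop_id entry_prod_append)
  define c where "c M = (if M = L1 then (\<lambda>v. g v * entry_prod L2 v) else (\<lambda>v. 0))" for M
  have "c M \<in> poly_fun \<and> c M (mat 1) = 0" for M
    using monomial(1) entry_prod_mat_1[OF L2, where 'a='a]
    by (simp add: c_def poly_fun.mult poly_fun_entry_prod poly_fun.const)
  moreover have "g v * entry_prod L v = (\<Sum>M\<in>offdiag_lists k. c M v * entry_prod M v)" for v
    using L1 by (simp add: c_def finite_offdiag_lists split mult_ac if_distrib if_distribR cong: if_cong)
  ultimately show ?case by blast
next
  case (add f g)
  then obtain c d where
    "\<forall>L\<in>offdiag_lists k. c L \<in> poly_fun \<and> c L (mat 1) = 0"
    "\<forall>v. f v = (\<Sum>L\<in>offdiag_lists k. c L v * entry_prod L v)"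
    "\<forall>L\<in>offdiag_lists k. d L \<in> poly_fun \<and> d L (mat 1) = 0"
    "\<forall>v. g v = (\<Sum>L\<in>offdiag_lists k. d L v * entry_prod L v)"
    by blast
  then show ?case
    by (intro exI[of _ "\<lambda>L v. c L v + d L v"]) (simp add: poly_fun.add distrib_right sum.distrib)
qed

lemma poly_fun_determinant_trick:
  fixes w :: "'a::field^'n^'n"
  assumes "finite G"
    and "c \<in> poly_fun" "c w \<noteq> 0"
    and "\<And>a b. a \<in> G \<Longrightarrow> b \<in> G \<Longrightarrow> e a b \<in> poly_fun \<and> e a b w = 0"
    and "\<And>a v. a \<in> G \<Longrightarrow> v \<in> X \<Longrightarrow> c v * m a v = (\<Sum>b\<in>G. e a b v * m b v)"
  shows "\<exists>h\<in>poly_fun. h w \<noteq> 0 \<and> (\<forall>a\<in>G. \<forall>v\<in>X. h v * m a v = 0)"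
  using assms
proof (induction G arbitrary: c e rule: finite_induct)
  case empty
  then show ?case by blast
next
  case (insert r G)
  text \<open>Solve the relation of r for u m_r, where u = c - e_rr, and substitute it into the other
    relations: this gives a system of the same shape over G.\<close>
  define u where "u v = c v - e r r v" for v
  have u: "u \<in> poly_fun" "u w \<noteq> 0"
    using insert.prems(1,2) insert.prems(3)[of r r] unfolding u_def[abs_def]
    by (auto intro: poly_fun_diff)
  have eq_r: "u v * m r v = (\<Sum>b\<in>G. e r b v * m b v)" if "v \<in> X" for v
    using insert.prems(4)[of r v] insert.hyps that by (simp add: u_def algebra_simps)
  have "\<exists>h\<in>poly_fun. h w \<noteq> 0 \<and> (\<forall>a\<in>G. \<forall>v\<in>X. h v * m a v = 0)"
  proof (rule insert.IH[where c = "\<lambda>v. u v * c v" and e = "\<lambda>a b v. u v * e a b v + e a r v * e r b v"])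
    show "(\<lambda>v. u v * c v) \<in> poly_fun" "u w * c w \<noteq> 0"
      using u insert.prems(1,2) by (auto intro: poly_fun.mult)
    show "(\<lambda>v. u v * e a b v + e a r v * e r b v) \<in> poly_fun \<and> u w * e a b w + e a r w * e r b w = 0"
      if "a \<in> G" "b \<in> G" for a b
      using u insert.prems(3) that by (auto intro!: poly_fun.mult poly_fun.add)
    show "u v * c v * m a v = (\<Sum>b\<in>G. (u v * e a b v + e a r v * e r b v) * m b v)"
      if "a \<in> G" "v \<in> X" for a v
    proof -
      have "c v * m a v = (\<Sum>b\<in>G. e a b v * m b v) + e a r v * m r v"
        using insert.prems(4)[of a v] insert.hyps that by auto
      then have "u v * c v * m a v = u v * ((\<Sum>b\<in>G. e a b v * m b v) + e a r v * m r v)"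
        by (simp add: mult.assoc)
      also have "\<dots> = u v * (\<Sum>b\<in>G. e a b v * m b v) + e a r v * (u v * m r v)"
        by (simp add: algebra_simps)
      finally show ?thesis
        unfolding eq_r[OF that(2)] by (simp add: sum_distrib_left sum.distrib algebra_simps)
    qed
  qed
  then obtain h where h: "h \<in> poly_fun" "h w \<noteq> 0" "\<forall>a\<in>G. \<forall>v\<in>X. h v * m a v = 0"
    by blast
  have "u v * h v * m a v = 0" if "a \<in> insert r G" "v \<in> X" for a v
  proof (cases "a = r")
    case True
    have "h v * (u v * m r v) = (\<Sum>b\<in>G. e r b v * (h v * m b v))"
      unfolding eq_r[OF that(2)] by (simp add: sum_distrib_left mult_ac)
    also have "\<dots> = 0"
      using h(3) that(2) by (intro sum.neutral) simp
    finally show ?thesis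
      using True by (simp add: mult_ac)
  next
    case False
    then show ?thesis using h(3) that by simp
  qed
  then show ?case
    using u h by (intro bexI[of _ "\<lambda>v. u v * h v"]) (auto intro: poly_fun.mult)
qed

section \<open>Off-diagonal entries of \<open>X\<close> near the identity\<close>

definition diag_coeff :: "nat \<Rightarrow> 'n \<times> 'n \<Rightarrow> ('a::comm_ring_1)^'n^'n \<Rightarrow> 'a" where
  "diag_coeff p x v = (v $ fst x $ fst x + v $ snd x $ snd x) ^ p
     - (v $ fst x $ fst x) ^ p - (v $ snd x $ snd x) ^ p"

lemma poly_fun_diag_coeff: "diag_coeff p x \<in> poly_fun"
  unfolding diag_coeff_def by (intro poly_fun_diff poly_fun_power poly_fun.add poly_fun.entry)

lemma diag_coeff_mat_1:
  assumes "p \<ge> 2"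
  shows "diag_coeff p x (mat 1 :: ('a::{comm_ring_1, ring_char_0})^'n^'n) \<noteq> 0"
proof -
  have "(2::nat) ^ p \<noteq> 2"
    using power_increasing[OF assms, of "2::nat"] by simp
  then have "(2::'a) ^ p \<noteq> 2"
    by (metis of_nat_eq_iff of_nat_numeral of_nat_power)
  then show ?thesis by (simp add: diag_coeff_def mat_def)
qed

lemma matrix_mult_offdiag_entry:
  fixes v w :: "'a::comm_semiring_1^'n::finite^'n"
  assumes "i \<noteq> j"
  shows "(v ** w) $ i $ j = v $ i $ i * w $ i $ j + v $ i $ j * w $ j $ j
    + (\<Sum>k\<in>UNIV - {i, j}. v $ i $ k * w $ k $ j)"
proof -
  let ?f = "\<lambda>k. v $ i $ k * w $ k $ j"
  have "sum ?f UNIV = ?f i + sum ?f (UNIV - {i})"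
    by (rule sum.remove) auto
  also have "sum ?f (UNIV - {i}) = ?f j + sum ?f (UNIV - {i} - {j})"
    using assms by (intro sum.remove) auto
  also have "UNIV - {i} - {j} = UNIV - {i, j}"
    by auto
  finally show ?thesis
    by (simp add: matrix_matrix_mult_def add.assoc)
qed

lemma Xset_square_entry:
  assumes "v \<in> Xset p"
  shows "((v ** v) $ i $ j) ^ p = (epow v p ** epow v p) $ i $ j"
proof -
  have "epow (mpow v 2) p = mpow (epow v p) 2"
    using assms by (simp add: Xset_def)
  then show ?thesis
    by (simp add: numeral_2_eq_2 epow_def vec_eq_iff)
qed

lemma diag_coeff_mult_entry_power:
  fixes x :: "'n::finite \<times> 'n"
  assumes "x \<in> off_diag" "p \<ge> 1"
  shows "\<exists>R \<in> offdiag_ideal_power (Suc p).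
    \<forall>v :: 'a::field^'n^'n \<in> Xset p. diag_coeff p x v * entry x v ^ p = R v"
proof -
  obtain i j where x: "x = (i, j)" and ij: "i \<noteq> j"
    using assms(1) by (cases x) (auto simp: off_diag_def)
  text \<open>Entry (i, j) of (v^2)^(p) = (v^(p))^2 reads (A + B)^p = (v_ii^p + v_jj^p) v_ij^p + S,
    while A^p = (v_ii + v_jj)^p v_ij^p.\<close>
  define A where "A v = (v $ i $ i + v $ j $ j) * v $ i $ j" for v :: "'a^'n^'n"
  define B where "B v = (\<Sum>k\<in>UNIV - {i, j}. v $ i $ k * v $ k $ j)" for v :: "'a^'n^'n"
  define S where "S v = (\<Sum>k\<in>UNIV - {i, j}. (v $ i $ k) ^ p * (v $ k $ j) ^ p)" for v :: "'a^'n^'n"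
  have A: "A \<in> offdiag_ideal_power 1"
    unfolding A_def[abs_def]
    by (intro offdiag_ideal_power_poly_mult poly_fun.add poly_fun.entry entry_in_offdiag_ideal_power ij)
  have "(\<lambda>v :: 'a^'n^'n. v $ i $ k * v $ k $ j) \<in> offdiag_ideal_power (1 + 1)"
    if "k \<in> UNIV - {i, j}" for k
    using that by (intro offdiag_ideal_power_mult entry_in_offdiag_ideal_power) auto
  then have B: "B \<in> offdiag_ideal_power 2"
    unfolding B_def[abs_def] by (intro offdiag_ideal_power_sum) (auto simp: numeral_2_eq_2)
  have "(\<lambda>v :: 'a^'n^'n. (v $ i $ k) ^ p * (v $ k $ j) ^ p) \<in> offdiag_ideal_power (1 * p + 1 * p)"
    if "k \<in> UNIV - {i, j}" for k
    using that by (intro offdiag_ideal_power_mult offdiag_ideal_power_power entry_in_offdiag_ideal_power) auto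
  then have "S \<in> offdiag_ideal_power (p + p)"
    unfolding S_def[abs_def] by (intro offdiag_ideal_power_sum) auto
  then have S: "S \<in> offdiag_ideal_power (Suc p)"
    by (rule offdiag_ideal_power_mono) (use assms(2) in simp)
  have R: "(\<lambda>v. S v - ((A v + B v) ^ p - A v ^ p)) \<in> offdiag_ideal_power (Suc p)"
    by (rule offdiag_ideal_power_diff[OF S power_add_diff_in_offdiag_ideal_power[OF A B]])
  show ?thesis
  proof (rule bexI[OF ballI R])
    fix v :: "'a^'n^'n"
    assume v: "v \<in> Xset p"
    have "(v ** v) $ i $ j = A v + B v"
      by (simp add: matrix_mult_offdiag_entry[OF ij] A_def B_def algebra_simps)
    moreover have "(epow v p ** epow v p) $ i $ j = ((v $ i $ i) ^ p + (v $ j $ j) ^ p) * (v $ i $ j) ^ p + S v"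
      by (simp add: matrix_mult_offdiag_entry[OF ij] S_def epow_def algebra_simps)
    ultimately have "(A v + B v) ^ p = ((v $ i $ i) ^ p + (v $ j $ j) ^ p) * (v $ i $ j) ^ p + S v"
      using Xset_square_entry[OF v, of i j] by simp
    moreover have "A v ^ p = (v $ i $ i + v $ j $ j) ^ p * (v $ i $ j) ^ p"
      by (simp add: A_def power_mult_distrib)
    ultimately show "diag_coeff p x v * entry x v ^ p = S v - ((A v + B v) ^ p - A v ^ p)"
      by (simp add: diag_coeff_def entry_def x algebra_simps)
  qed
qed

text \<open>By pigeonhole some position x occurs at least p times in L, and the factor v_x^p times
  the coefficient of x lies in J^(p+1) on X.\<close>

lemma diag_coeff_prod_mult_entry_prod:
  fixes L :: "('n::finite \<times> 'n) list"
  assumes "p \<ge> 1" and L: "set L \<subseteq> off_diag" "card (off_diag :: ('n \<times> 'n) set) * (p - 1) < length L"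
  shows "\<exists>F \<in> offdiag_ideal_power (Suc (length L)). \<forall>v :: 'a::field^'n^'n \<in> Xset p.
    (\<Prod>x\<in>off_diag. diag_coeff p x v) * entry_prod L v = F v"
proof -
  obtain x where x: "x \<in> off_diag" "p \<le> count_list L x"
    using count_list_pigeonhole[OF _ L] by auto
  then obtain M where M: "length M = length L - p" "set M \<subseteq> set L"
    "\<forall>v :: 'a^'n^'n. entry_prod L v = entry x v ^ p * entry_prod M v"
    using entry_prod_extract_power by blast
  obtain R where R: "R \<in> offdiag_ideal_power (Suc p)"
    "\<forall>v :: 'a^'n^'n \<in> Xset p. diag_coeff p x v * entry x v ^ p = R v"
    using diag_coeff_mult_entry_power[OF x(1) assms(1)] by blast
  have "p \<le> length L"
    using x(2) count_le_length[of L x] by simp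
  moreover have "set M \<subseteq> off_diag"
    using M(2) L(1) by blast
  note offdiag_ideal_power_mult[OF entry_prod_in_offdiag_ideal_power[OF this] R(1)]
  ultimately have "(\<lambda>v. entry_prod M v * R v) \<in> offdiag_ideal_power (Suc (length L))"
    using M(1) by simp
  moreover have "(\<lambda>v. \<Prod>z\<in>off_diag - {x}. diag_coeff p z v) \<in> poly_fun"
    by (rule poly_fun_prod) (auto intro: poly_fun_diag_coeff)
  ultimately have F: "(\<lambda>v. (\<Prod>z\<in>off_diag - {x}. diag_coeff p z v) * (entry_prod M v * R v))
      \<in> offdiag_ideal_power (Suc (length L))"
    by (rule offdiag_ideal_power_poly_mult[rotated])
  have eq: "(\<Prod>z\<in>off_diag. diag_coeff p z v) * entry_prod L v
      = (\<Prod>z\<in>off_diag - {x}. diag_coeff p z v) * (entry_prod M v * R v)" if "v \<in> Xset p" for v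
  proof -
    have "(\<Prod>z\<in>off_diag. diag_coeff p z v) = diag_coeff p x v * (\<Prod>z\<in>off_diag - {x}. diag_coeff p z v)"
      using x(1) by (simp add: prod.remove)
    then show ?thesis
      using M(3) R(2) that by (simp add: mult_ac)
  qed
  show ?thesis
    by (rule bexI[OF ballI F]) (simp add: eq)
qed

lemma offdiag_monomial_relations:
  assumes "p \<ge> 1" "card (off_diag :: ('n::finite \<times> 'n) set) * (p - 1) < K"
  shows "\<exists>e. \<forall>L \<in> offdiag_lists K :: ('n \<times> 'n) list set.
    (\<forall>M\<in>offdiag_lists K. e L M \<in> poly_fun \<and> e L M (mat 1 :: 'a::field^'n^'n) = 0) \<and>
    (\<forall>v\<in>Xset p. (\<Prod>x\<in>off_diag. diag_coeff p x v) * entry_prod L v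
       = (\<Sum>M\<in>offdiag_lists K. e L M v * entry_prod M v))"
proof (rule bchoice, rule ballI)
  fix L :: "('n \<times> 'n) list"
  assume "L \<in> offdiag_lists K"
  then have L: "set L \<subseteq> off_diag" "length L = K"
    by (auto simp: offdiag_lists_def)
  obtain F :: "'a^'n^'n \<Rightarrow> 'a" where F: "F \<in> offdiag_ideal_power (Suc K)"
    "\<forall>v\<in>Xset p. (\<Prod>x\<in>off_diag. diag_coeff p x v) * entry_prod L v = F v"
    using diag_coeff_prod_mult_entry_prod[OF assms(1) L(1)] assms(2) L(2) by auto
  obtain e where "\<forall>M\<in>offdiag_lists K. e M \<in> poly_fun \<and> e M (mat 1) = 0"
    "\<forall>v. F v = (\<Sum>M\<in>offdiag_lists K. e M v * entry_prod M v)"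
    using offdiag_ideal_power_Suc_normal_form[OF F(1)] by blast
  with F(2) show "\<exists>e. (\<forall>M\<in>offdiag_lists K. e M \<in> poly_fun \<and> e M (mat 1 :: 'a^'n^'n) = 0) \<and>
    (\<forall>v\<in>Xset p. (\<Prod>x\<in>off_diag. diag_coeff p x v) * entry_prod L v
       = (\<Sum>M\<in>offdiag_lists K. e M v * entry_prod M v))"
    by (intro exI[of _ e]) simp
qed

lemma Xset_offdiag_vanishing_polynomial:
  assumes "p \<ge> 2"
  shows "\<exists>h \<in> poly_fun. h (mat 1 :: 'a::field_char_0^'n::finite^'n) \<noteq> 0 \<and>
    (\<forall>v \<in> Xset p. h v \<noteq> 0 \<longrightarrow> (\<forall>i j. i \<noteq> j \<longrightarrow> v $ i $ j = 0))"
proof -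
  define K where "K = card (off_diag :: ('n \<times> 'n) set) * (p - 1) + 1"
  define G :: "('n \<times> 'n) list set" where "G = offdiag_lists K"
  define c where "c v = (\<Prod>x\<in>off_diag. diag_coeff p x v)" for v :: "'a^'n^'n"
  have c: "c \<in> poly_fun" "c (mat 1) \<noteq> 0"
    unfolding c_def[abs_def] using diag_coeff_mat_1[OF assms]
    by (auto intro: poly_fun_prod poly_fun_diag_coeff)
  obtain e where e: "\<forall>L\<in>G. (\<forall>M\<in>G. e L M \<in> poly_fun \<and> e L M (mat 1 :: 'a^'n^'n) = 0) \<and>
      (\<forall>v\<in>Xset p. c v * entry_prod L v = (\<Sum>M\<in>G. e L M v * entry_prod M v))"
    using offdiag_monomial_relations[of p K] assms unfolding G_def c_def K_def by auto
  have "\<exists>h\<in>poly_fun. h (mat 1 :: 'a^'n^'n) \<noteq> 0 \<and> (\<forall>L\<in>G. \<forall>v\<in>Xset p. h v * entry_prod L v = 0)"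
  proof (rule poly_fun_determinant_trick[where c = c and e = e])
    show "finite G"
      by (simp add: G_def finite_offdiag_lists)
    show "c \<in> poly_fun" "c (mat 1) \<noteq> 0"
      by (fact c)+
    show "e L M \<in> poly_fun \<and> e L M (mat 1) = 0" if "L \<in> G" "M \<in> G" for L M
      using e that by blast
    show "c v * entry_prod L v = (\<Sum>M\<in>G. e L M v * entry_prod M v)" if "L \<in> G" "v \<in> Xset p" for L v
      using e that by blast
  qed
  then obtain h :: "'a^'n^'n \<Rightarrow> 'a" where h: "h \<in> poly_fun" "h (mat 1) \<noteq> 0"
    "\<forall>L\<in>G. \<forall>v\<in>Xset p. h v * entry_prod L v = 0"
    by blast
  have "v $ i $ j = 0" if "v \<in> Xset p" "h v \<noteq> 0" "i \<noteq> j" for v i j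
  proof -
    have "replicate K (i, j) \<in> G"
      using that(3) by (auto simp: G_def offdiag_lists_def off_diag_def)
    then have "h v * (v $ i $ j) ^ K = 0"
      using h(3) that(1) by (force simp: entry_prod_replicate entry_def)
    then show ?thesis
      using that(2) by simp
  qed
  with h show ?thesis
    by blast
qed

section \<open>The diagonal torus\<close>

definition diag_mat :: "('n \<Rightarrow> 'a::zero) \<Rightarrow> 'a^'n^'n" where
  "diag_mat d = (\<chi> i j. if i = j then d i else 0)"

lemma diag_mat_mult:
  fixes d e :: "'n::finite \<Rightarrow> 'a::semiring_1"
  shows "diag_mat d ** diag_mat e = diag_mat (\<lambda>i. d i * e i)"
proof -
  have "(\<Sum>k\<in>UNIV. (if i = k then d i else 0) * (if k = j then e k else 0))
      = (if i = j then d i * e i else 0)" for i j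
  proof -
    have "(\<Sum>k\<in>UNIV. (if i = k then d i else 0) * (if k = j then e k else 0))
        = (\<Sum>k\<in>UNIV. if k = i then (if i = j then d i * e i else 0) else 0)"
      by (rule sum.cong) auto
    then show ?thesis
      by (simp add: sum.delta)
  qed
  then show ?thesis
    by (simp add: diag_mat_def matrix_matrix_mult_def vec_eq_iff)
qed

lemma mat_1_eq_diag_mat: "mat 1 = diag_mat (\<lambda>_. 1)"
  by (simp add: diag_mat_def mat_def)

lemma mpow_diag_mat:
  fixes d :: "'n::finite \<Rightarrow> 'a::semiring_1"
  shows "mpow (diag_mat d) m = diag_mat (\<lambda>i. d i ^ m)"
  by (induction m) (simp_all add: mat_1_eq_diag_mat diag_mat_mult)

lemma epow_diag_mat:
  fixes d :: "'n::finite \<Rightarrow> 'a::semiring_1"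
  assumes "p \<ge> 1"
  shows "epow (diag_mat d) p = diag_mat (\<lambda>i. d i ^ p)"
  using assms by (simp add: diag_mat_def epow_def vec_eq_iff zero_power)

lemma invertible_diag_mat_iff:
  "invertible (diag_mat d :: 'a::field^'n::finite^'n) \<longleftrightarrow> (\<forall>i. d i \<noteq> 0)"
proof -
  have "det (diag_mat d :: 'a^'n^'n) = (\<Prod>i\<in>UNIV. d i)"
    by (subst det_diagonal) (simp_all add: diag_mat_def)
  then show ?thesis
    by (simp add: invertible_det_nz)
qed

lemma matrix_inv_diag_mat:
  assumes "\<forall>i. d i \<noteq> 0"
  shows "matrix_inv (diag_mat d :: 'a::field^'n::finite^'n) = diag_mat (\<lambda>i. inverse (d i))"
  unfolding matrix_inv_def
proof (rule some_equality)
  show "diag_mat d ** diag_mat (\<lambda>i. inverse (d i)) = mat 1 \<and> diag_mat (\<lambda>i. inverse (d i)) ** diag_mat d = mat 1"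
    using assms by (simp add: diag_mat_mult mat_1_eq_diag_mat)
  fix B assume B: "diag_mat d ** B = mat 1 \<and> B ** diag_mat d = mat 1"
  have "B = B ** (diag_mat d ** diag_mat (\<lambda>i. inverse (d i)))"
    using assms by (simp add: diag_mat_mult mat_1_eq_diag_mat[symmetric])
  also have "\<dots> = diag_mat (\<lambda>i. inverse (d i))"
    using B by (simp add: matrix_mul_assoc)
  finally show "B = diag_mat (\<lambda>i. inverse (d i))" .
qed

lemma diag_mat_diag_entries:
  fixes v :: "'a::zero^'n::finite^'n"
  assumes "\<forall>i j. i \<noteq> j \<longrightarrow> v $ i $ j = 0"
  shows "diag_mat (\<lambda>i. v $ i $ i) = v"
  using assms by (simp add: diag_mat_def vec_eq_iff)

lemma diag_torus_iff:
  fixes v :: "'a::field^'n::finite^'n"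
  shows "v \<in> diag_torus \<longleftrightarrow> (\<forall>i j. i \<noteq> j \<longrightarrow> v $ i $ j = 0) \<and> (\<forall>i. v $ i $ i \<noteq> 0)"
proof -
  have "invertible v \<longleftrightarrow> (\<forall>i. v $ i $ i \<noteq> 0)" if "\<forall>i j. i \<noteq> j \<longrightarrow> v $ i $ j = 0"
    using invertible_diag_mat_iff[of "\<lambda>i. v $ i $ i"] unfolding diag_mat_diag_entries[OF that] .
  then show ?thesis
    by (auto simp: diag_torus_def GL_def)
qed

lemma mat_1_in_diag_torus: "mat 1 \<in> (diag_torus :: ('a::field^'n::finite^'n) set)"
  by (simp add: diag_torus_iff mat_def)

lemma diag_torus_subset_Xset:
  assumes "p \<ge> 1"
  shows "(diag_torus :: ('a::field^'n::finite^'n) set) \<subseteq> Xset p"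
proof
  fix v :: "'a^'n^'n"
  assume "v \<in> diag_torus"
  then have off: "\<forall>i j. i \<noteq> j \<longrightarrow> v $ i $ j = 0" and diag: "\<forall>i. v $ i $ i \<noteq> 0"
    by (simp_all add: diag_torus_iff)
  define d where "d i = v $ i $ i" for i
  have v: "v = diag_mat d"
    unfolding d_def[abs_def] diag_mat_diag_entries[OF off] ..
  have d: "\<forall>i. d i \<noteq> 0"
    using diag by (simp add: d_def)
  have "epow (mpow v m) p = mpow (epow v p) m" for m
    using assms by (simp add: v mpow_diag_mat epow_diag_mat power_mult[symmetric] mult.commute)
  moreover have "epow (mpow v m) p ** epow (mpow (matrix_inv v) m) p = mat 1" for m
    using assms d by (simp add: v matrix_inv_diag_mat mpow_diag_mat epow_diag_mat diag_mat_mult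
        mat_1_eq_diag_mat power_mult_distrib[symmetric] power_inverse[symmetric])
  moreover have "v \<in> GL"
    using d by (simp add: v GL_def invertible_diag_mat_iff)
  ultimately show "v \<in> Xset p"
    unfolding Xset_def by blast
qed

section \<open>Irreducibility\<close>

lemma zariski_closed_GL_diag_torus: "zariski_closed_GL (diag_torus :: ('a::field^'n^'n) set)"
  unfolding zariski_closed_GL_def
proof (intro exI conjI)
  let ?S = "{f. \<exists>i j. i \<noteq> j \<and> f = (\<lambda>v :: 'a^'n^'n. v $ i $ j)}"
  show "?S \<subseteq> poly_fun"
    using poly_fun.entry by blast
  show "diag_torus = {v \<in> GL. \<forall>f\<in>?S. f v = 0}"
    unfolding diag_torus_def by auto
qed

lemma zariski_closed_GL_zero_set: "h \<in> poly_fun \<Longrightarrow> zariski_closed_GL {v \<in> GL. h v = 0}"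
  unfolding zariski_closed_GL_def by (intro exI[of _ "{h}"]) auto

definition line_through :: "'a::field^'n^'n \<Rightarrow> 'a^'n^'n \<Rightarrow> 'a \<Rightarrow> 'a^'n^'n" where
  "line_through a b t = (\<chi> i j. a $ i $ j + t * (b $ i $ j - a $ i $ j))"

lemma line_through_0: "line_through a b 0 = a"
  by (simp add: line_through_def vec_eq_iff)

lemma line_through_1: "line_through a b 1 = b"
  by (simp add: line_through_def vec_eq_iff)

lemma poly_fun_along_line:
  assumes "f \<in> poly_fun"
  shows "\<exists>q. \<forall>t. poly q t = f (line_through a b t)"
  using assms
proof (induction rule: poly_fun.induct)
  case (const c)
  show ?case by (intro exI[of _ "[:c:]"]) simp
next
  case (entry i j)
  show ?case
    by (intro exI[of _ "[:a $ i $ j, b $ i $ j - a $ i $ j:]"]) (simp add: line_through_def algebra_simps)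
next
  case (add f g)
  then obtain q r where "\<forall>t. poly q t = f (line_through a b t)" "\<forall>t. poly r t = g (line_through a b t)"
    by blast
  then show ?case by (intro exI[of _ "q + r"]) simp
next
  case (mult f g)
  then obtain q r where "\<forall>t. poly q t = f (line_through a b t)" "\<forall>t. poly r t = g (line_through a b t)"
    by blast
  then show ?case by (intro exI[of _ "q * r"]) simp
qed

lemma poly_fun_nonvanishing_on_line:
  fixes a b :: "'a::field^'n^'n"
  assumes "infinite (UNIV :: 'a set)" "finite F" "F \<subseteq> poly_fun"
    and "\<And>f. f \<in> F \<Longrightarrow> f a \<noteq> 0 \<or> f b \<noteq> 0"
  shows "\<exists>t. \<forall>f\<in>F. f (line_through a b t) \<noteq> 0"
proof -
  have "\<forall>f\<in>F. \<exists>q. \<forall>t. poly q t = f (line_through a b t)"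
    using assms(3) poly_fun_along_line by blast
  then obtain q where q: "\<And>f t. f \<in> F \<Longrightarrow> poly (q f) t = f (line_through a b t)"
    by (metis bchoice)
  have "q f \<noteq> 0" if "f \<in> F" for f
  proof
    assume "q f = 0"
    then have "f a = 0" "f b = 0"
      using q[OF that, of 0] q[OF that, of 1] by (simp_all add: line_through_0 line_through_1)
    with assms(4)[OF that] show False
      by simp
  qed
  then have "(\<Prod>f\<in>F. q f) \<noteq> 0"
    using assms(2) by simp
  then have "finite {t. poly (\<Prod>f\<in>F. q f) t = 0}"
    by (rule poly_roots_finite)
  then obtain t where "poly (\<Prod>f\<in>F. q f) t \<noteq> 0"
    using ex_new_if_finite[OF assms(1)] by auto
  then have "poly (q f) t \<noteq> 0" if "f \<in> F" for f
    using assms(2) that by (simp add: poly_prod)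
  then show ?thesis
    using q by auto
qed

lemma diag_torus_common_nonzero:
  fixes a b :: "'a::field^'n::finite^'n"
  assumes "infinite (UNIV :: 'a set)" "a \<in> diag_torus" "b \<in> diag_torus"
    and "f \<in> poly_fun" "g \<in> poly_fun" "f a \<noteq> 0" "g b \<noteq> 0"
  shows "\<exists>v\<in>diag_torus. f v \<noteq> 0 \<and> g v \<noteq> 0"
proof -
  let ?F = "insert f (insert g ((\<lambda>i v. v $ i $ i) ` UNIV))"
  have "\<exists>t. \<forall>h\<in>?F. h (line_through a b t) \<noteq> 0"
  proof (rule poly_fun_nonvanishing_on_line[OF assms(1)])
    show "finite ?F"
      by simp
    show "?F \<subseteq> poly_fun"
      using assms(4,5) by (auto intro: poly_fun.entry)
    show "h a \<noteq> 0 \<or> h b \<noteq> 0" if "h \<in> ?F" for h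
      using that assms(2,6,7) by (auto simp: diag_torus_iff)
  qed
  then obtain t where t: "f (line_through a b t) \<noteq> 0" "g (line_through a b t) \<noteq> 0"
    "\<And>i. line_through a b t $ i $ i \<noteq> 0"
    by auto
  have "line_through a b t \<in> diag_torus"
    using assms(2,3) t(3) by (simp add: diag_torus_iff line_through_def)
  with t(1,2) show ?thesis
    by blast
qed

lemma diag_torus_irreducible:
  assumes "infinite (UNIV :: 'a set)"
  shows "zariski_irreducible (diag_torus :: ('a::field^'n::finite^'n) set)"
  unfolding zariski_irreducible_def
proof (intro conjI allI impI)
  show "diag_torus \<subseteq> GL" "diag_torus \<noteq> {}"
    using mat_1_in_diag_torus by (auto simp: diag_torus_def)
  fix A B :: "('a^'n^'n) set"
  assume A: "zariski_closed_GL A" and B: "zariski_closed_GL B" and sub: "diag_torus \<subseteq> A \<union> B"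
  show "diag_torus \<subseteq> A \<or> diag_torus \<subseteq> B"
  proof (rule ccontr)
    assume "\<not> ?thesis"
    then obtain a b where a: "a \<in> diag_torus" "a \<notin> A" and b: "b \<in> diag_torus" "b \<notin> B"
      by blast
    obtain SA SB where SA: "SA \<subseteq> poly_fun" "A = {v \<in> GL. \<forall>f\<in>SA. f v = 0}"
      and SB: "SB \<subseteq> poly_fun" "B = {v \<in> GL. \<forall>f\<in>SB. f v = 0}"
      using A B unfolding zariski_closed_GL_def by blast
    obtain f g where f: "f \<in> SA" "f a \<noteq> 0" and g: "g \<in> SB" "g b \<noteq> 0"
      using a b SA(2) SB(2) by (auto simp: diag_torus_def)
    have fg: "f \<in> poly_fun" "g \<in> poly_fun"
      using f(1) g(1) SA(1) SB(1) by blast+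
    obtain v where "v \<in> diag_torus" "f v \<noteq> 0" "g v \<noteq> 0"
      using diag_torus_common_nonzero[OF assms a(1) b(1) fg f(2) g(2)] by blast
    then show False
      using sub f(1) g(1) SA(2) SB(2) by auto
  qed
qed

lemma irreducible_subset_Xset_through_1:
  fixes Y :: "('a::field_char_0^'n::finite^'n) set"
  assumes "p \<ge> 2" "Y \<subseteq> Xset p" "zariski_irreducible Y" "mat 1 \<in> Y"
  shows "Y \<subseteq> diag_torus"
proof -
  obtain h :: "'a^'n^'n \<Rightarrow> 'a" where h: "h \<in> poly_fun" "h (mat 1) \<noteq> 0"
    "\<forall>v\<in>Xset p. h v \<noteq> 0 \<longrightarrow> (\<forall>i j. i \<noteq> j \<longrightarrow> v $ i $ j = 0)"
    using Xset_offdiag_vanishing_polynomial[OF assms(1)] by blast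
  have "Y \<subseteq> diag_torus \<union> {v \<in> GL. h v = 0}"
    using assms(2) h(3) by (auto simp: diag_torus_def Xset_def)
  then have "Y \<subseteq> diag_torus \<or> Y \<subseteq> {v \<in> GL. h v = 0}"
    using assms(3) zariski_closed_GL_diag_torus zariski_closed_GL_zero_set[OF h(1)]
    unfolding zariski_irreducible_def by blast
  then show ?thesis
    using assms(4) h(2) by blast
qed

theorem lemma3p13:
  fixes p :: nat
  assumes "alg_closed TYPE('a::field_char_0)"
    and "uncountable (UNIV :: 'a set)"
    and "p \<ge> 2"
  shows "{Z :: ('a ^'n::finite^'n) set. irreducible_component (Xset p) Z \<and> mat 1 \<in> Z}
           = {diag_torus}"
proof -
  have T: "diag_torus \<subseteq> Xset p" "zariski_irreducible (diag_torus :: ('a^'n^'n) set)"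
    using assms(3) diag_torus_subset_Xset[of p] diag_torus_irreducible[OF infinite_UNIV_char_0]
    by auto
  have "irreducible_component (Xset p) Z \<and> mat 1 \<in> Z \<longleftrightarrow> Z = diag_torus" for Z :: "('a^'n^'n) set"
  proof
    assume Z: "irreducible_component (Xset p) Z \<and> mat 1 \<in> Z"
    then have "Z \<subseteq> diag_torus"
      using irreducible_subset_Xset_through_1[OF assms(3)] by (auto simp: irreducible_component_def)
    with Z T show "Z = diag_torus"
      by (auto simp: irreducible_component_def)
  next
    assume "Z = diag_torus"
    then show "irreducible_component (Xset p) Z \<and> mat 1 \<in> Z"
      using T irreducible_subset_Xset_through_1[OF assms(3)] mat_1_in_diag_torus
      by (auto simp: irreducible_component_def)
  qed
  then show ?thesis
    by blast
qed

end
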